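(* For all $\theta_1,\theta_2\in\mathbb{R}$, the mixed-power-Euclidean bilinear form $g^{E,\theta_1,\theta_2}$ on $\mathrm{SPD}_n$ is symmetric and positive definite at every point, hence a Riemannian metric on $\mathrm{SPD}_n$; moreover $g^{E,\theta_1,\theta_2}=g^{E,\theta_2,\theta_1}$.
   Context: For $\theta\in\mathbb{R}$ define $\varphi_\theta:\mathrm{SPD}_n\to\mathrm{Sym}_n$ by $\varphi_\theta=\frac1\theta\mathrm{pow}_\theta$ if $\theta\neq0$ and $\varphi_0=\log$, where $\mathrm{pow}_\theta=\exp\circ(\theta\log)$ is the matrix power (acting on eigenvalues) and $\log$ the symmetric matrix logarithm; $\partial_X\varphi_\theta(\Sigma)$ denotes the differential of $\varphi_\theta$ at $\Sigma$ applied to $X\in\mathrm{Sym}_n\cong T_\Sigma\mathrm{SPD}_n$. The mixed-power-Euclidean bilinear form is $g^{E,\theta_1,\theta_2}_\Sigma(X,Y)=\mathrm{tr}\big(\partial_X\varphi_{\theta_1}(\Sigma)\,\partial_Y\varphi_{\theta_2}(\Sigma)\big)$, i.e. $\frac{1}{\theta_1\theta_2}\mathrm{tr}(\partial_X\mathrm{pow}_{\theta_1}(\Sigma)\,\partial_Y\mathrm{pow}_{\theta_2}(\Sigma))$ when $\theta_1\theta_2\ne0$. *)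

theory Defs
  imports "HOL-Analysis.Analysis"
begin

definition Sym :: "(real^'n^'n) set" where
  "Sym = {A. transpose A = A}"

definition SPD :: "(real^'n^'n) set" where
  "SPD = {A. transpose A = A \<and> (\<forall>x. x \<noteq> 0 \<longrightarrow> x \<bullet> (A *v x) > 0)}"

definition diag_mat :: "('n::finite \<Rightarrow> real) \<Rightarrow> real^'n^'n" where
  "diag_mat d = (\<chi> i j. if i = j then d i else 0)"

definition matfun :: "(real \<Rightarrow> real) \<Rightarrow> real^'n^'n \<Rightarrow> real^'n^'n" where
  "matfun f A = (SOME M. \<exists>U d. orthogonal_matrix U \<and> A = U ** diag_mat d ** transpose U
                               \<and> M = U ** diag_mat (\<lambda>i. f (d i)) ** transpose U)"

definition mat_log :: "real^'n^'n \<Rightarrow> real^'n^'n" where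
  "mat_log = matfun ln"

definition mat_pow :: "real \<Rightarrow> real^'n^'n \<Rightarrow> real^'n^'n" where
  "mat_pow \<theta> = matfun (\<lambda>x. exp (\<theta> * ln x))"

definition phi :: "real \<Rightarrow> real^'n^'n \<Rightarrow> real^'n^'n" where
  "phi \<theta> = (if \<theta> = 0 then mat_log else (\<lambda>A. (1 / \<theta>) *\<^sub>R mat_pow \<theta> A))"

definition dphi :: "real \<Rightarrow> real^'n^'n \<Rightarrow> real^'n^'n \<Rightarrow> real^'n^'n" where
  "dphi \<theta> \<Sigma> X = vector_derivative (\<lambda>t. phi \<theta> (\<Sigma> + t *\<^sub>R X)) (at 0)"

definition gE :: "real \<Rightarrow> real \<Rightarrow> real^'n^'n \<Rightarrow> real^'n^'n \<Rightarrow> real^'n^'n \<Rightarrow> real" where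
  "gE \<theta>1 \<theta>2 \<Sigma> X Y = trace (dphi \<theta>1 \<Sigma> X ** dphi \<theta>2 \<Sigma> Y)"

end

theory Submission
  imports Defs
begin

text \<open>Diagonalise \<open>\<Sigma> = U diag(\<lambda>) U\<^sup>T\<close>. By the Daleckii--Krein formula the differential of
  \<open>\<phi>\<^sub>\<theta>\<close> at \<open>\<Sigma>\<close> acts in the eigenbasis as a Schur product: the \<open>(i,j)\<close> entry of
  \<open>U\<^sup>T (\<partial>\<^sub>X\<phi>\<^sub>\<theta>) U\<close> is \<open>\<phi>\<^sub>\<theta>[\<lambda>\<^sub>i,\<lambda>\<^sub>j] X'\<^sub>i\<^sub>j\<close>, where \<open>X' = U\<^sup>T X U\<close> and \<open>\<phi>\<^sub>\<theta>[x,y]\<close> is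
  the first divided difference of the scalar function \<open>\<phi>\<^sub>\<theta>\<close>. Hence
  \<open>g(X,Y) = \<Sum>\<^sub>i\<^sub>j \<phi>\<^sub>\<theta>\<^sub>1[\<lambda>\<^sub>i,\<lambda>\<^sub>j] \<phi>\<^sub>\<theta>\<^sub>2[\<lambda>\<^sub>i,\<lambda>\<^sub>j] X'\<^sub>i\<^sub>j Y'\<^sub>i\<^sub>j\<close>, which is symmetric in \<open>X, Y\<close> and in
  \<open>\<theta>\<^sub>1, \<theta>\<^sub>2\<close>. Since \<open>\<phi>\<^sub>\<theta>' x = x\<^bsup>\<theta>-1\<^esup> > 0\<close>, every divided difference is positive by the mean
  value theorem, and \<open>X \<noteq> 0\<close> forces some \<open>X'\<^sub>i\<^sub>j \<noteq> 0\<close>, so the form is positive definite.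

  The Daleckii--Krein formula itself comes from an exact expansion of \<open>f(B) - f(S)\<close> in the
  eigenbasis of \<open>S\<close> whose remainder involves second divided differences of \<open>f\<close>; these stay
  bounded because the eigenvalues of \<open>\<Sigma> + tX\<close> remain in a compact subinterval of \<open>(0,\<infinity>)\<close>
  for small \<open>t\<close>.\<close>

section \<open>Eigenvectors of real symmetric matrices\<close>

lemma symmetric_matrix_inner:
  fixes A :: "real^'n^'n"
  assumes "transpose A = A"
  shows "(A *v x) \<bullet> y = x \<bullet> (A *v y)"
  by (metis assms dot_lmul_matrix transpose_matrix_vector)

lemma Rayleigh_maximizer_is_eigenvector:
  fixes A :: "real^'n^'n"
  assumes sym: "transpose A = A" and S: "subspace S" and inv: "\<And>x. x \<in> S \<Longrightarrow> A *v x \<in> S"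
    and vS: "v \<in> S" and nv: "norm v = 1"
    and max: "\<And>y. y \<in> S \<Longrightarrow> y \<bullet> (A *v y) \<le> (v \<bullet> (A *v v)) * (norm y)\<^sup>2"
  shows "A *v v = (v \<bullet> (A *v v)) *\<^sub>R v"
proof -
  define m where "m = v \<bullet> (A *v v)"
  define w where "w = A *v v - m *\<^sub>R v"
  have vv: "v \<bullet> v = 1" using nv by (simp add: norm_eq_1)
  have wS: "w \<in> S" unfolding w_def using S inv[OF vS] vS by (simp add: subspace_diff subspace_scale)
  have vw: "v \<bullet> w = 0" unfolding w_def by (simp add: inner_diff_right vv m_def)
  have wAv: "w \<bullet> (A *v v) = w \<bullet> w"
    using vw by (simp add: w_def inner_diff_left inner_diff_right inner_commute)
  \<comment> \<open>Testing the maximality of \<open>v\<close> against \<open>v + s w\<close> gives \<open>2 s |w|\<^sup>2 \<le> O(s\<^sup>2)\<close>, so \<open>w = 0\<close>.\<close>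
  have quad: "2 * s * (w \<bullet> w) \<le> s\<^sup>2 * (m * (w \<bullet> w) - w \<bullet> (A *v w))" for s
  proof -
    have "v + s *\<^sub>R w \<in> S" using S vS wS by (simp add: subspace_add subspace_scale)
    from max[OF this] have "(v + s *\<^sub>R w) \<bullet> (A *v (v + s *\<^sub>R w)) \<le> m * (norm (v + s *\<^sub>R w))\<^sup>2"
      by (simp add: m_def)
    moreover have "v \<bullet> (A *v w) = w \<bullet> (A *v v)"
      using symmetric_matrix_inner[OF sym, of v w] by (simp add: inner_commute)
    moreover have "(norm (v + s *\<^sub>R w))\<^sup>2 = 1 + s\<^sup>2 * (w \<bullet> w)"
      unfolding power2_norm_eq_inner
      by (simp add: inner_add_left inner_add_right inner_commute vv vw power2_eq_square)
    ultimately show ?thesis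
      by (simp add: inner_commute wAv m_def power2_eq_square algebra_simps)
  qed
  have "w \<bullet> w = 0"
  proof (rule ccontr)
    assume "w \<bullet> w \<noteq> 0"
    hence N: "w \<bullet> w > 0" by (simp add: order_less_le)
    define C where "C = m * (w \<bullet> w) - w \<bullet> (A *v w)"
    define s where "s = (w \<bullet> w) / (\<bar>C\<bar> + 1)"
    have s0: "s > 0" using N by (simp add: s_def)
    have "2 * s * (w \<bullet> w) \<le> s\<^sup>2 * C" using quad[of s] C_def by simp
    hence "2 * (w \<bullet> w) \<le> s * C" using s0 by (simp add: power2_eq_square mult.assoc)
    also have "\<dots> \<le> s * \<bar>C\<bar>" using s0 by (simp add: mult_left_mono)
    also have "\<dots> = (w \<bullet> w) * (\<bar>C\<bar> / (\<bar>C\<bar> + 1))" by (simp add: s_def)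
    also have "\<dots> < (w \<bullet> w) * 1" using N by (intro mult_strict_left_mono) auto
    finally show False using N by simp
  qed
  thus ?thesis by (simp add: w_def m_def)
qed

lemma symmetric_matrix_unit_eigenvector:
  fixes A :: "real^'n^'n"
  assumes sym: "transpose A = A" and S: "subspace S" and inv: "\<And>x. x \<in> S \<Longrightarrow> A *v x \<in> S"
    and ne: "S \<noteq> {0}"
  shows "\<exists>v\<in>S. norm v = 1 \<and> A *v v = (v \<bullet> (A *v v)) *\<^sub>R v"
proof -
  let ?q = "\<lambda>x. x \<bullet> (A *v x)"
  let ?K = "S \<inter> sphere 0 1"
  have "compact ?K" using S by (simp add: closed_subspace closed_Int_compact)
  moreover obtain x where "x \<in> S" "x \<noteq> 0" using ne S subspace_0 by blast
  then have "x /\<^sub>R norm x \<in> ?K" using S by (simp add: subspace_scale)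
  hence "?K \<noteq> {}" by blast
  moreover have "continuous_on ?K ?q"
    by (intro continuous_on_inner continuous_on_id matrix_vector_mult_linear_continuous_on)
  ultimately obtain v where v: "v \<in> ?K" "\<And>y. y \<in> ?K \<Longrightarrow> ?q y \<le> ?q v"
    using continuous_attains_sup[of ?K ?q] by blast
  have "?q y \<le> ?q v * (norm y)\<^sup>2" if y: "y \<in> S" for y
  proof (cases "y = 0")
    case False
    have "y /\<^sub>R norm y \<in> ?K" using y False S by (simp add: subspace_scale)
    hence "?q (y /\<^sub>R norm y) \<le> ?q v" by (rule v(2))
    moreover have "?q (y /\<^sub>R norm y) = ?q y / (norm y)\<^sup>2"
      using False by (simp add: matrix_vector_mult_scaleR power2_eq_square field_simps)
    ultimately show ?thesis using False by (simp add: divide_le_eq)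
  qed simp
  moreover have "v \<in> S" "norm v = 1" using v(1) by auto
  ultimately show ?thesis
    using Rayleigh_maximizer_is_eigenvector[OF sym S inv] by blast
qed

lemma symmetric_matrix_eigenvector_orthogonal:
  fixes A :: "real^'n^'n"
  assumes "transpose A = A" and "A *v v = c *\<^sub>R v" and "v \<bullet> x = 0"
  shows "v \<bullet> (A *v x) = 0"
  using symmetric_matrix_inner[OF assms(1), of v x] assms(2,3) by simp

lemma symmetric_matrix_orthonormal_eigenbasis:
  fixes A :: "real^'n^'n"
  assumes sym: "transpose A = A"
  shows "subspace S \<Longrightarrow> (\<forall>x\<in>S. A *v x \<in> S) \<Longrightarrow> \<exists>B. B \<subseteq> S \<and> span B = S \<and> pairwise orthogonal B
            \<and> (\<forall>x\<in>B. norm x = 1 \<and> A *v x = (x \<bullet> (A *v x)) *\<^sub>R x)"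
proof (induction "dim S" arbitrary: S rule: less_induct)
  case less
  show ?case
  proof (cases "S = {0}")
    case True then show ?thesis by (intro exI[of _ "{}"]) auto
  next
    case False
    obtain v where v: "v \<in> S" "norm v = 1" "A *v v = (v \<bullet> (A *v v)) *\<^sub>R v"
      using symmetric_matrix_unit_eigenvector[OF sym less.prems(1) _ False] less.prems(2) by blast
    have vv: "v \<bullet> v = 1" using v(2) by (simp add: norm_eq_1)
    define S' where "S' = S \<inter> {x. v \<bullet> x = 0}"
    have sub': "subspace S'"
      unfolding S'_def using less.prems(1) subspace_hyperplane[of v] by (rule subspace_inter)
    have inv': "\<forall>x\<in>S'. A *v x \<in> S'"
      using less.prems(2) symmetric_matrix_eigenvector_orthogonal[OF sym v(3)] by (simp add: S'_def)
    have "v \<notin> S'" using vv by (simp add: S'_def)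
    hence "S' \<subset> S" using v(1) S'_def by blast
    hence "dim S' < dim S"
      by (metis dim_psubset less.prems(1) span_eq_iff sub')
    then obtain B' where B': "B' \<subseteq> S'" "span B' = S'" "pairwise orthogonal B'"
        "\<forall>x\<in>B'. norm x = 1 \<and> A *v x = (x \<bullet> (A *v x)) *\<^sub>R x"
      using less.hyps sub' inv' by blast
    show ?thesis
    proof (intro exI[of _ "insert v B'"] conjI)
      show sub: "insert v B' \<subseteq> S" using B'(1) v(1) by (auto simp: S'_def)
      show "span (insert v B') = S"
      proof
        show "span (insert v B') \<subseteq> S" using span_minimal[OF sub less.prems(1)] .
        show "S \<subseteq> span (insert v B')"
        proof
          fix x assume x: "x \<in> S"
          have "x - (v \<bullet> x) *\<^sub>R v \<in> S'"
            using x v(1) less.prems(1) vv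
            by (simp add: S'_def subspace_diff subspace_scale inner_diff_right)
          thus "x \<in> span (insert v B')" using B'(2) span_breakdown_eq by blast
        qed
      qed
      show "pairwise orthogonal (insert v B')"
        using B'(1,3) unfolding pairwise_insert by (auto simp: S'_def orthogonal_def inner_commute)
      show "\<forall>x\<in>insert v B'. norm x = 1 \<and> A *v x = (x \<bullet> (A *v x)) *\<^sub>R x"
        using B'(4) v by auto
    qed
  qed
qed

section \<open>Orthogonal diagonalisation\<close>

declare transpose_matrix_vector [simp del]

abbreviation orth_diag :: "real^'n^'n \<Rightarrow> ('n::finite \<Rightarrow> real) \<Rightarrow> real^'n^'n" where
  "orth_diag U d \<equiv> U ** diag_mat d ** transpose U"

lemma diag_mat_mult_entry: "(diag_mat d ** M) $ i $ j = d i * M $ i $ j"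
  unfolding matrix_matrix_mult_def diag_mat_def
  by (auto simp: if_distrib if_distribR cong: if_cong)

lemma mult_diag_mat_entry: "(M ** diag_mat d) $ i $ j = M $ i $ j * d j"
  unfolding matrix_matrix_mult_def diag_mat_def
  by (auto simp: if_distrib if_distribR cong: if_cong)

lemma diag_mat_vector_mult: "diag_mat h *v z = (\<chi> k. h k * z $ k)"
  unfolding matrix_vector_mult_def diag_mat_def
  by (auto simp: vec_eq_iff if_distrib if_distribR cong: if_cong)

lemma transpose_diag_mat [simp]: "transpose (diag_mat h) = diag_mat h"
  by (simp add: transpose_def diag_mat_def vec_eq_iff)

lemma diag_mat_mult: "diag_mat g ** diag_mat h = diag_mat (\<lambda>k. g k * h k)"
  by (simp add: vec_eq_iff diag_mat_mult_entry) (simp add: diag_mat_def)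

lemma diag_mat_diff: "diag_mat g - diag_mat h = diag_mat (\<lambda>k. g k - h k)"
  by (simp add: vec_eq_iff diag_mat_def)

lemma diag_mat_const: "diag_mat (\<lambda>_. c) = c *\<^sub>R mat 1"
  by (simp add: vec_eq_iff diag_mat_def mat_def)

lemma transpose_add: "transpose (A + B) = transpose A + transpose (B :: 'a::semiring_1^'n^'m)"
  by (simp add: transpose_def vec_eq_iff)

lemma matrix_mult_diff_conj: "A ** B ** C - A ** D ** C = A ** (B - D) ** (C :: real^'k^'n)"
  for A :: "real^'m^'l"
  by (simp add: matrix_matrix_mult_def vec_eq_iff sum_subtractf right_diff_distrib left_diff_distrib)

lemma orthogonal_matrix_cancel:
  fixes U :: "real^'n^'n"
  assumes "orthogonal_matrix U"
  shows "transpose U *v (U *v z) = z" "U *v (transpose U *v z) = z"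
    and "X ** transpose U ** U = X" "X ** U ** transpose U = X"
  using assms
  by (simp_all add: matrix_vector_mul_assoc orthogonal_matrix_def flip: matrix_mul_assoc)

lemma norm_orthogonal_transpose_mult:
  fixes U :: "real^'n^'n"
  assumes "orthogonal_matrix U"
  shows "norm (transpose U *v z) = norm z"
proof -
  have "(transpose U *v z) \<bullet> (transpose U *v z) = z \<bullet> z"
    by (metis assms dot_lmul_matrix orthogonal_matrix_cancel(2) transpose_matrix_vector)
  thus ?thesis by (simp add: norm_eq_sqrt_inner)
qed

lemma orthogonal_conj_entry:
  fixes U N :: "real^'n^'n"
  shows "(transpose U ** N ** U) $ i $ j = column i U \<bullet> (N *v column j U)"
proof -
  have "(transpose U ** N ** U) $ i $ j = (\<Sum>k\<in>UNIV. \<Sum>l\<in>UNIV. U $ l $ i * N $ l $ k * U $ k $ j)"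
    by (simp add: matrix_matrix_mult_def transpose_def sum_distrib_right)
  also have "\<dots> = (\<Sum>l\<in>UNIV. \<Sum>k\<in>UNIV. U $ l $ i * N $ l $ k * U $ k $ j)"
    by (rule sum.swap)
  also have "\<dots> = column i U \<bullet> (N *v column j U)"
    by (simp add: inner_vec_def column_def matrix_vector_mult_def sum_distrib_left mult.assoc)
  finally show ?thesis .
qed

lemma matrix_vector_mult_inner: "((M::real^'n^'m) *v a) \<bullet> y = a \<bullet> (transpose M *v y)"
  by (metis dot_lmul_matrix transpose_matrix_vector transpose_transpose)

lemma orth_diag_vector_mult: "orth_diag U h *v w = U *v (\<chi> k. h k * (transpose U *v w) $ k)"
  by (simp add: matrix_vector_mul_assoc[symmetric] diag_mat_vector_mult)

lemma orth_diag_inner: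
  "(orth_diag U h *v w) \<bullet> z = (\<Sum>k\<in>UNIV. h k * (transpose U *v w) $ k * (transpose U *v z) $ k)"
  by (simp only: orth_diag_vector_mult matrix_vector_mult_inner) (simp add: inner_vec_def mult.assoc)

lemma transpose_orth_diag [simp]: "transpose (orth_diag U h) = orth_diag U h"
  by (simp add: matrix_transpose_mul matrix_mul_assoc)

lemma scaleR_orth_diag: "c *\<^sub>R orth_diag U h = orth_diag U (\<lambda>k. c * h k)"
proof -
  have "diag_mat (\<lambda>k. c * h k) = c *\<^sub>R diag_mat h" by (simp add: vec_eq_iff diag_mat_def)
  thus ?thesis by (simp add: matrix_scalar_ac scalar_matrix_assoc)
qed

lemma orth_diag_diff: "orth_diag U g - orth_diag U h = orth_diag U (\<lambda>k. g k - h k)"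
  by (simp add: matrix_mult_diff_conj diag_mat_diff)

lemma orth_diag_mult:
  assumes "orthogonal_matrix U"
  shows "orth_diag U g ** orth_diag U h = orth_diag U (\<lambda>k. g k * h k)"
  using assms by (simp add: matrix_mul_assoc orthogonal_matrix_cancel(3) flip: diag_mat_mult)

lemma orth_diag_const:
  assumes "orthogonal_matrix U"
  shows "orth_diag U (\<lambda>_. c) = c *\<^sub>R mat 1"
proof -
  have "orth_diag U (\<lambda>_. c) = c *\<^sub>R (U ** transpose U)"
    by (simp add: diag_mat_const matrix_scalar_ac scalar_matrix_assoc)
  thus ?thesis using assms by (simp add: orthogonal_matrix_def)
qed

lemma orth_diag_column:
  assumes "orthogonal_matrix U"
  shows "orth_diag U h *v column j U = h j *\<^sub>R column j U"
proof -
  have col: "column j U = U *v axis j 1"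
    by (simp add: column_def matrix_vector_mult_def axis_def vec_eq_iff if_distrib cong: if_cong)
  have "(\<chi> k. h k * (transpose U *v column j U) $ k) = h j *\<^sub>R axis j 1"
    unfolding col orthogonal_matrix_cancel(1)[OF assms] by (simp add: axis_def vec_eq_iff)
  thus ?thesis unfolding orth_diag_vector_mult by (simp add: col matrix_vector_mult_scaleR)
qed

lemma orth_diag_of_eigenvector_columns:
  fixes A U :: "real^'n^'n"
  assumes U: "orthogonal_matrix U" and eig: "\<And>c. A *v column c U = d c *\<^sub>R column c U"
  shows "A = orth_diag U d"
proof -
  have "(A ** U) $ r $ c = (U ** diag_mat d) $ r $ c" for r c
  proof -
    have "(A ** U) $ r $ c = (A *v column c U) $ r"
      by (simp add: matrix_matrix_mult_def matrix_vector_mult_def column_def)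
    also have "\<dots> = U $ r $ c * d c" unfolding eig by (simp add: column_def)
    also have "\<dots> = (U ** diag_mat d) $ r $ c" by (simp add: mult_diag_mat_entry)
    finally show ?thesis .
  qed
  then have "A ** U = U ** diag_mat d" by (simp add: vec_eq_iff)
  then have "A ** (U ** transpose U) = orth_diag U d" by (simp add: matrix_mul_assoc)
  then show ?thesis using U by (simp add: orthogonal_matrix_def)
qed

lemma symmetric_matrix_orthogonal_diagonalization:
  fixes A :: "real^'n^'n"
  assumes sym: "transpose A = A"
  obtains U d where "orthogonal_matrix U" "A = orth_diag U d"
proof -
  obtain B where B: "span B = UNIV" "pairwise orthogonal B"
      "\<forall>x\<in>B. norm x = 1 \<and> A *v x = (x \<bullet> (A *v x)) *\<^sub>R x"
    using symmetric_matrix_orthonormal_eigenbasis[OF sym, of UNIV] by auto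
  have "0 \<notin> B" using B(3) by auto
  hence ind: "independent B" using pairwise_orthogonal_independent B(2) by blast
  have "card B = dim (UNIV :: (real^'n) set)" using dim_span_eq_card_independent[OF ind] B(1) by simp
  hence "card B = card (UNIV :: 'n set)" by simp
  moreover have "finite B" using independent_bound[OF ind] by blast
  ultimately obtain f where f: "bij_betw f (UNIV::'n set) B"
    using finite_same_card_bij by (metis finite_class.finite_UNIV)
  have fB: "f c \<in> B" for c using f by (auto simp: bij_betw_def)
  have finj: "f i = f j \<Longrightarrow> i = j" for i j using f by (auto simp: bij_betw_def inj_def)
  define U where "U = (\<chi> r c. f c $ r)"
  have col: "column c U = f c" for c by (simp add: U_def column_def vec_eq_iff)
  have orth: "orthogonal_matrix U"
    unfolding orthogonal_matrix_orthonormal_columns col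
    using B(2,3) fB finj unfolding pairwise_def by metis
  have "A *v column c U = (f c \<bullet> (A *v f c)) *\<^sub>R column c U" for c
    using B(3) fB[of c] by (simp add: col)
  then have "A = orth_diag U (\<lambda>c. f c \<bullet> (A *v f c))"
    by (rule orth_diag_of_eigenvector_columns[OF orth])
  with orth that show ?thesis by blast
qed

lemma symmetric_matrix_family_diagonalization:
  fixes A :: "'a \<Rightarrow> real^'n^'n"
  assumes "\<And>t. transpose (A t) = A t"
  obtains V \<mu> where "\<And>t. orthogonal_matrix (V t)" "\<And>t. A t = orth_diag (V t) (\<mu> t)"
proof -
  have "\<exists>p. orthogonal_matrix (fst p) \<and> A t = orth_diag (fst p) (snd p)" for t
    by (rule symmetric_matrix_orthogonal_diagonalization[OF assms]) auto
  then obtain p where "\<forall>t. orthogonal_matrix (fst (p t)) \<and> A t = orth_diag (fst (p t)) (snd (p t))"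
    by metis
  then show ?thesis using that[of "\<lambda>t. fst (p t)" "\<lambda>t. snd (p t)"] by blast
qed

lemma orth_diag_fun_eq:
  fixes U V :: "real^'n^'n"
  assumes U: "orthogonal_matrix U" and V: "orthogonal_matrix V"
    and eq: "orth_diag U d = orth_diag V e"
  shows "orth_diag U (\<lambda>i. f (d i)) = orth_diag V (\<lambda>i. f (e i))"
proof -
  define W where "W = transpose U ** V"
  \<comment> \<open>\<open>W\<close> intertwines \<open>diag d\<close> and \<open>diag e\<close>, so \<open>W\<^sub>i\<^sub>j \<noteq> 0\<close> only where \<open>d i = e j\<close>.\<close>
  have "diag_mat d ** W = transpose U ** orth_diag U d ** V"
    using U by (simp add: W_def matrix_mul_assoc orthogonal_matrix_def)
  also have "\<dots> = W ** diag_mat e"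
    unfolding eq using V by (simp add: W_def matrix_mul_assoc orthogonal_matrix_cancel(3))
  finally have "d i * W $ i $ j = W $ i $ j * e j" for i j
    by (metis diag_mat_mult_entry mult_diag_mat_entry)
  then have "W $ i $ j = 0 \<or> d i = e j" for i j by auto
  then have "f (d i) * W $ i $ j = W $ i $ j * f (e j)" for i j
    by (metis mult.commute mult_zero_left)
  then have "diag_mat (\<lambda>i. f (d i)) ** W = W ** diag_mat (\<lambda>i. f (e i))"
    by (simp add: vec_eq_iff diag_mat_mult_entry mult_diag_mat_entry)
  then have "U ** (diag_mat (\<lambda>i. f (d i)) ** W) ** transpose V
      = U ** (W ** diag_mat (\<lambda>i. f (e i))) ** transpose V" by simp
  thus ?thesis
    using U V by (simp add: W_def matrix_mul_assoc orthogonal_matrix_cancel(3,4)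
        orthogonal_matrix_def)
qed

lemma matfun_orth_diag:
  assumes "orthogonal_matrix U"
  shows "matfun f (orth_diag U d) = orth_diag U (\<lambda>i. f (d i))"
proof -
  let ?P = "\<lambda>M. \<exists>V e. orthogonal_matrix V \<and> orth_diag U d = orth_diag V e
                      \<and> M = orth_diag V (\<lambda>i. f (e i))"
  have "?P (orth_diag U (\<lambda>i. f (d i)))" using assms by blast
  hence "?P (SOME M. ?P M)" by (rule someI)
  then obtain V e where "orthogonal_matrix V" "orth_diag U d = orth_diag V e"
    and "(SOME M. ?P M) = orth_diag V (\<lambda>i. f (e i))" by blast
  with orth_diag_fun_eq[OF assms] show ?thesis unfolding matfun_def by simp
qed

lemma orth_diag_Rayleigh_bounds:
  fixes U :: "real^'n^'n"
  assumes U: "orthogonal_matrix U" and v: "norm v = 1" and h: "\<And>k. m \<le> h k \<and> h k \<le> M"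
  shows "m \<le> v \<bullet> (orth_diag U h *v v)" "v \<bullet> (orth_diag U h *v v) \<le> M"
proof -
  \<comment> \<open>The Rayleigh quotient is a convex combination of the \<open>h k\<close> with weights \<open>y k\<close>.\<close>
  define y where "y k = ((transpose U *v v) $ k)\<^sup>2" for k
  have q: "v \<bullet> (orth_diag U h *v v) = (\<Sum>k\<in>UNIV. h k * y k)"
    by (simp add: inner_commute[of v] orth_diag_inner y_def power2_eq_square mult.assoc)
  have "(\<Sum>k\<in>UNIV. y k) = (norm (transpose U *v v))\<^sup>2"
    unfolding y_def power2_norm_eq_inner by (simp add: inner_vec_def power2_eq_square)
  hence s1: "(\<Sum>k\<in>UNIV. y k) = 1" using norm_orthogonal_transpose_mult[OF U] v by simp
  have y0: "y k \<ge> 0" for k by (simp add: y_def)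
  have "m = (\<Sum>k\<in>UNIV. m * y k)" using s1 by (simp add: sum_distrib_left[symmetric])
  also have "\<dots> \<le> (\<Sum>k\<in>UNIV. h k * y k)" using h y0 by (intro sum_mono mult_right_mono) auto
  finally show "m \<le> v \<bullet> (orth_diag U h *v v)" using q by simp
  have "(\<Sum>k\<in>UNIV. h k * y k) \<le> (\<Sum>k\<in>UNIV. M * y k)" using h y0 by (intro sum_mono mult_right_mono) auto
  also have "\<dots> = M" using s1 by (simp add: sum_distrib_left[symmetric])
  finally show "v \<bullet> (orth_diag U h *v v) \<le> M" using q by simp
qed

lemma orth_diag_eigenvalue_perturbation:
  fixes U V E :: "real^'n^'n"
  assumes U: "orthogonal_matrix U" and V: "orthogonal_matrix V"
    and eq: "orth_diag U l + E = orth_diag V \<mu>" and l: "\<And>k. a \<le> l k \<and> l k \<le> b"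
    and E: "\<And>x. norm x = 1 \<Longrightarrow> \<bar>x \<bullet> (E *v x)\<bar> \<le> \<epsilon>"
  shows "a - \<epsilon> \<le> \<mu> k \<and> \<mu> k \<le> b + \<epsilon>"
proof -
  define v where "v = column k V"
  have nv: "norm v = 1" using V by (simp add: v_def orthogonal_matrix_orthonormal_columns)
  have "orth_diag V \<mu> *v v = \<mu> k *\<^sub>R v" by (simp add: v_def orth_diag_column[OF V])
  hence "\<mu> k = v \<bullet> (orth_diag V \<mu> *v v)" using nv by (simp add: norm_eq_1)
  also have "\<dots> = v \<bullet> (orth_diag U l *v v) + v \<bullet> (E *v v)"
    by (simp flip: eq add: matrix_vector_mult_add_rdistrib inner_add_right)
  finally show ?thesis
    using orth_diag_Rayleigh_bounds[OF U nv, where h = l, OF l] E[OF nv] by (auto simp: abs_le_iff)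
qed

lemma orth_diag_inner_bound:
  fixes V :: "real^'n^'n"
  assumes V: "orthogonal_matrix V" and H: "\<And>k. \<bar>h k\<bar> \<le> H"
  shows "\<bar>(orth_diag V h *v w) \<bullet> z\<bar> \<le> real CARD('n) * H * norm w * norm z"
proof -
  have "\<bar>(orth_diag V h *v w) \<bullet> z\<bar>
      \<le> (\<Sum>k\<in>UNIV. \<bar>h k * (transpose V *v w) $ k * (transpose V *v z) $ k\<bar>)"
    unfolding orth_diag_inner by (rule sum_abs)
  also have "\<dots> \<le> (\<Sum>k\<in>(UNIV::'n set). H * norm w * norm z)"
  proof (rule sum_mono)
    fix k
    have "\<bar>(transpose V *v x) $ k\<bar> \<le> norm x" for x
      using component_le_norm_cart[of "transpose V *v x" k] norm_orthogonal_transpose_mult[OF V]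
      by simp
    then show "\<bar>h k * (transpose V *v w) $ k * (transpose V *v z) $ k\<bar> \<le> H * norm w * norm z"
      unfolding abs_mult using H[of k] by (intro mult_mono) (auto intro: order_trans[OF _ H[of k]])
  qed
  finally show ?thesis by simp
qed

lemma orth_diag_fun_diff_eigenvector:
  fixes V A FA :: "real^'n^'n"
  assumes V: "orthogonal_matrix V"
    and g: "\<And>k. g (\<mu> k) * (\<mu> k - c) = f (\<mu> k) - f c"
    and Au: "A *v u = c *\<^sub>R u" and FAu: "FA *v u = f c *\<^sub>R u"
  shows "(orth_diag V (\<lambda>k. f (\<mu> k)) - FA) *v u
       = orth_diag V (\<lambda>k. g (\<mu> k)) *v ((orth_diag V \<mu> - A) *v u)"
proof -
  have const: "orth_diag V (\<lambda>_. x) *v u = x *\<^sub>R u" for x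
    by (simp add: orth_diag_const[OF V] scaleR_matrix_vector_assoc[symmetric])
  have shift: "(orth_diag V h - M) *v u = orth_diag V (\<lambda>k. h k - x) *v u"
    if "M *v u = x *\<^sub>R u" for h M x
    using that by (simp only: orth_diag_diff[symmetric] matrix_vector_mult_diff_rdistrib const)
  have "orth_diag V (\<lambda>k. g (\<mu> k)) *v ((orth_diag V \<mu> - A) *v u)
      = (orth_diag V (\<lambda>k. g (\<mu> k)) ** orth_diag V (\<lambda>k. \<mu> k - c)) *v u"
    by (simp only: shift[OF Au] matrix_vector_mul_assoc)
  also have "\<dots> = orth_diag V (\<lambda>k. f (\<mu> k) - f c) *v u"
    by (simp only: orth_diag_mult[OF V] g)
  also have "\<dots> = (orth_diag V (\<lambda>k. f (\<mu> k)) - FA) *v u"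
    by (simp only: shift[OF FAu])
  finally show ?thesis ..
qed

section \<open>Divided differences\<close>

definition divdiff :: "(real \<Rightarrow> real) \<Rightarrow> (real \<Rightarrow> real) \<Rightarrow> real \<Rightarrow> real \<Rightarrow> real" where
  "divdiff f f' x y = (if x = y then f' x else (f y - f x) / (y - x))"

lemma divdiff_times_diff: "(y - x) * divdiff f f' x y = f y - f x"
  by (simp add: divdiff_def)

lemma divdiff_commute: "divdiff f f' x y = divdiff f f' y x"
  by (auto simp: divdiff_def) (metis minus_diff_eq minus_divide_divide)

lemma divdiff_pos:
  assumes df: "\<And>x. x > 0 \<Longrightarrow> (f has_real_derivative f' x) (at x)"
    and pos: "\<And>x. x > 0 \<Longrightarrow> f' x > 0"
    and x: "x > 0" and y: "y > 0"
  shows "divdiff f f' x y > 0"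
proof -
  have *: "(f q - f p) / (q - p) > 0" if pq: "0 < p" "p < q" for p q
  proof -
    obtain z where "z > p" "z < q" "f q - f p = (q - p) * f' z"
      using MVT2[OF \<open>p < q\<close>, of f f'] df pq by (meson less_le_trans)
    thus ?thesis using pos[of z] pq by simp
  qed
  show ?thesis
  proof (cases x y rule: linorder_cases)
    case less then show ?thesis using *[OF x less] by (simp add: divdiff_def)
  next
    case equal then show ?thesis using pos[OF x] by (simp add: divdiff_def)
  next
    case greater then show ?thesis using *[OF y greater] divdiff_commute[of f f' x y]
      by (simp add: divdiff_def)
  qed
qed

lemma has_integral_divdiff:
  assumes df: "\<And>x. x > 0 \<Longrightarrow> (f has_real_derivative f' x) (at x)"
    and x: "x > 0" and y: "y > 0"
  shows "((\<lambda>s. f' (x + s * (y - x))) has_integral divdiff f f' x y) {0..1}"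
proof (cases "x = y")
  case True
  then show ?thesis using has_integral_const_real[of "f' x" 0 1] by (simp add: divdiff_def)
next
  case False
  define F where "F s = f (x + s * (y - x)) / (y - x)" for s
  have pos: "x + s * (y - x) > 0" if "0 \<le> s" "s \<le> 1" for s
  proof -
    have "x + s * (y - x) = (1 - s) * x + s * y" by (simp add: algebra_simps)
    moreover have "(1 - s) * x \<ge> 0" "s * y \<ge> 0" using that x y by auto
    moreover have "(1 - s) * x > 0 \<or> s * y > 0" using that x y by (cases "s = 1") auto
    ultimately show ?thesis by linarith
  qed
  have "(F has_vector_derivative f' (x + s * (y - x))) (at s within {0..1})" if "s \<in> {0..1}" for s
  proof -
    have "(F has_real_derivative f' (x + s * (y - x)) * (y - x) / (y - x)) (at s)"
      unfolding F_def using that pos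
      by (auto intro!: derivative_eq_intros DERIV_chain2[OF df])
    thus ?thesis using False
      by (simp add: has_real_derivative_iff_has_vector_derivative has_vector_derivative_at_within)
  qed
  hence "((\<lambda>s. f' (x + s * (y - x))) has_integral F 1 - F 0) {0..1}"
    using fundamental_theorem_of_calculus[of "0::real" 1 F] by simp
  moreover have "F 1 - F 0 = divdiff f f' x y"
    using False by (simp add: F_def divdiff_def diff_divide_distrib)
  ultimately show ?thesis by simp
qed

lemma divdiff_Lipschitz:
  assumes df: "\<And>x. x > 0 \<Longrightarrow> (f has_real_derivative f' x) (at x)"
    and df': "\<And>x. x > 0 \<Longrightarrow> (f' has_real_derivative f'' x) (at x)"
    and a: "a > 0" and K: "\<And>x. a \<le> x \<Longrightarrow> x \<le> b \<Longrightarrow> \<bar>f'' x\<bar> \<le> K" and K0: "K \<ge> 0"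
    and x: "a \<le> x" "x \<le> b" and y: "a \<le> y" "y \<le> b" and z: "a \<le> z" "z \<le> b"
  shows "\<bar>divdiff f f' x y - divdiff f f' x z\<bar> \<le> K * \<bar>y - z\<bar>"
proof -
  have I: "((\<lambda>s. f' (x + s * (y - x)) - f' (x + s * (z - x)))
      has_integral (divdiff f f' x y - divdiff f f' x z)) {0..1}"
    by (intro has_integral_diff has_integral_divdiff[OF df]) (use a x y z in auto)
  have in_ab: "x + s * (w - x) \<in> {a..b}" if "0 \<le> s" "s \<le> 1" "a \<le> w" "w \<le> b" for s w
  proof -
    have e: "x + s * (w - x) = (1 - s) * x + s * w" by (simp add: algebra_simps)
    have "(1 - s) * a \<le> (1 - s) * x" "s * a \<le> s * w" "(1 - s) * x \<le> (1 - s) * b" "s * w \<le> s * b"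
      using that x by (auto intro: mult_left_mono)
    thus ?thesis unfolding e by (auto simp: algebra_simps)
  qed
  have "norm (f' (x + s * (y - x)) - f' (x + s * (z - x))) \<le> K * \<bar>y - z\<bar>" if "s \<in> cbox 0 1" for s
  proof -
    have s: "0 \<le> s" "s \<le> 1" using that by auto
    have "norm (f' (x + s * (y - x)) - f' (x + s * (z - x)))
        \<le> K * norm ((x + s * (y - x)) - (x + s * (z - x)))"
    proof (rule field_differentiable_bound[of "{a..b}"])
      show "(f' has_field_derivative f'' w) (at w within {a..b})" if "w \<in> {a..b}" for w
        using df'[of w] that a by (auto intro: has_field_derivative_at_within)
    qed (use K in_ab[OF s y] in_ab[OF s z] in auto)
    also have "\<dots> = K * (s * \<bar>y - z\<bar>)"
      using s by (simp add: abs_mult flip: right_diff_distrib)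
    also have "\<dots> \<le> K * \<bar>y - z\<bar>"
      using s K0 by (simp add: mult_left_mono mult_left_le_one_le)
    finally show ?thesis .
  qed
  then have "norm (divdiff f f' x y - divdiff f f' x z) \<le> K * \<bar>y - z\<bar> * Henstock_Kurzweil_Integration.content (cbox (0::real) 1)"
    using I K0 by (intro has_integral_bound) auto
  thus ?thesis by simp
qed

lemma divdiff2_bound:
  assumes df: "\<And>x. x > 0 \<Longrightarrow> (f has_real_derivative f' x) (at x)"
    and df': "\<And>x. x > 0 \<Longrightarrow> (f' has_real_derivative f'' x) (at x)"
    and a: "a > 0" and K: "\<And>x. a \<le> x \<Longrightarrow> x \<le> b \<Longrightarrow> \<bar>f'' x\<bar> \<le> K" and K0: "K \<ge> 0"
    and x: "a \<le> x" "x \<le> b" and y: "a \<le> y" "y \<le> b" and z: "a \<le> z" "z \<le> b"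
  shows "\<bar>divdiff (divdiff f f' x) (\<lambda>_. 0) z y\<bar> \<le> K"
proof (cases "z = y")
  case False
  have "\<bar>divdiff f f' x y - divdiff f f' x z\<bar> \<le> K * \<bar>y - z\<bar>"
    by (rule divdiff_Lipschitz[OF df df' a K K0 x y z])
  thus ?thesis using False by (simp add: divdiff_def divide_le_eq)
qed (use K0 in \<open>simp add: divdiff_def\<close>)

lemma orth_diag_fun_second_order:
  fixes U V :: "real^'n^'n" and l \<mu> :: "'n \<Rightarrow> real"
  assumes U: "orthogonal_matrix U" and V: "orthogonal_matrix V"
  defines "D \<equiv> orth_diag V \<mu> - orth_diag U l"
  shows "column i U \<bullet> ((orth_diag V (\<lambda>k. f (\<mu> k)) - orth_diag U (\<lambda>k. f (l k))) *v column j U)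
    = divdiff f f' (l i) (l j) * (column i U \<bullet> (D *v column j U))
      + (orth_diag V (\<lambda>k. divdiff (divdiff f f' (l j)) (\<lambda>_. 0) (l i) (\<mu> k)) *v (D *v column i U))
          \<bullet> (D *v column j U)"
proof -
  let ?u = "\<lambda>i. column i U"
  let ?g = "divdiff f f' (l j)"
  let ?h = "divdiff ?g (\<lambda>_. 0) (l i)"
  have eig: "orth_diag U h *v ?u k = h k *\<^sub>R ?u k" for h k by (rule orth_diag_column[OF U])
  have first: "(orth_diag V (\<lambda>k. f (\<mu> k)) - orth_diag U (\<lambda>k. f (l k))) *v ?u j
      = orth_diag V (\<lambda>k. ?g (\<mu> k)) *v (D *v ?u j)"
    unfolding D_def
    by (rule orth_diag_fun_diff_eigenvector[OF V, where c = "l j"])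
      (simp_all add: eig divdiff_times_diff mult.commute)
  have "(orth_diag V (\<lambda>k. ?g (\<mu> k)) - orth_diag U (\<lambda>k. ?g (l k))) *v ?u i
      = orth_diag V (\<lambda>k. ?h (\<mu> k)) *v (D *v ?u i)"
    unfolding D_def
    by (rule orth_diag_fun_diff_eigenvector[OF V, where c = "l i"])
      (simp_all add: eig divdiff_times_diff mult.commute)
  then have second: "orth_diag V (\<lambda>k. ?g (\<mu> k)) *v ?u i = ?g (l i) *\<^sub>R ?u i + orth_diag V (\<lambda>k. ?h (\<mu> k)) *v (D *v ?u i)"
    by (simp add: eig algebra_simps)
  have "?u i \<bullet> (orth_diag V (\<lambda>k. ?g (\<mu> k)) *v (D *v ?u j))
      = (orth_diag V (\<lambda>k. ?g (\<mu> k)) *v ?u i) \<bullet> (D *v ?u j)"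
    by (simp add: symmetric_matrix_inner)
  also have "\<dots> = ?g (l i) * (?u i \<bullet> (D *v ?u j)) + (orth_diag V (\<lambda>k. ?h (\<mu> k)) *v (D *v ?u i)) \<bullet> (D *v ?u j)"
    by (simp add: second inner_add_left)
  finally show ?thesis by (simp add: first divdiff_commute[of f f' "l j"])
qed

section \<open>Derivatives of spectral matrix functions\<close>

lemma eigenvalues_of_perturbation_bounded:
  fixes U X :: "real^'n^'n"
  assumes U: "orthogonal_matrix U" and l: "\<And>k. l k > 0"
    and V: "\<And>t. orthogonal_matrix (V t)" and eq: "\<And>t. orth_diag U l + t *\<^sub>R X = orth_diag (V t) (\<mu> t)"
  obtains a b \<delta> where "a > 0" "\<delta> > 0" "\<And>k. a \<le> l k \<and> l k \<le> b"
    and "\<And>t k. \<bar>t\<bar> \<le> \<delta> \<Longrightarrow> a \<le> \<mu> t k \<and> \<mu> t k \<le> b"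
proof -
  obtain KX where KX: "KX > 0" "\<And>x. norm (X *v x) \<le> norm x * KX"
    using bounded_linear.pos_bounded[OF matrix_vector_mul_bounded_linear[of X]] by blast
  define lmin where "lmin = Min (range l)"
  define lmax where "lmax = Max (range l)"
  have l_range: "lmin \<le> l k \<and> l k \<le> lmax" for k by (simp add: lmin_def lmax_def)
  have lmin: "lmin > 0" using l Min_in[of "range l"] by (auto simp: lmin_def)
  define \<delta> where "\<delta> = lmin / (2 * KX)"
  have \<mu>: "lmin - lmin / 2 \<le> \<mu> t k \<and> \<mu> t k \<le> lmax + lmin / 2" if t: "\<bar>t\<bar> \<le> \<delta>" for t k
  proof (rule orth_diag_eigenvalue_perturbation[OF U V eq l_range])
    fix x :: "real^'n" assume x: "norm x = 1"
    have "\<bar>x \<bullet> ((t *\<^sub>R X) *v x)\<bar> = \<bar>t\<bar> * \<bar>x \<bullet> (X *v x)\<bar>"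
      by (simp add: scaleR_matrix_vector_assoc[symmetric] abs_mult)
    also have "\<dots> \<le> \<delta> * KX"
      using Cauchy_Schwarz_ineq2[of x "X *v x"] KX(2)[of x] x t KX(1)
      by (intro mult_mono) auto
    also have "\<dots> = lmin / 2" using KX(1) by (simp add: \<delta>_def)
    finally show "\<bar>x \<bullet> ((t *\<^sub>R X) *v x)\<bar> \<le> lmin / 2" .
  qed
  show ?thesis
  proof (rule that[of "lmin / 2" \<delta> "lmax + lmin / 2"])
    show "\<delta> > 0" using lmin KX(1) by (simp add: \<delta>_def)
    show "lmin / 2 \<le> l k \<and> l k \<le> lmax + lmin / 2" for k using l_range[of k] lmin by auto
    show "lmin / 2 \<le> \<mu> t k \<and> \<mu> t k \<le> lmax + lmin / 2" if "\<bar>t\<bar> \<le> \<delta>" for t k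
      using \<mu>[OF that, of k] by simp
  qed (use lmin in simp)
qed

lemma bounded_linear_matrix_conj: "bounded_linear (\<lambda>Q. A ** Q ** (B :: real^'n^'n))"
  for A :: "real^'n^'n"
proof -
  have "linear (\<lambda>Q. A ** Q ** B)"
  proof (rule linearI)
    fix Q1 Q2 :: "real^'n^'n"
    have "(P1 + P2) ** B = P1 ** B + P2 ** B" for P1 P2 :: "real^'n^'n"
      by (simp add: vec_eq_iff matrix_matrix_mult_def sum.distrib distrib_right)
    then show "A ** (Q1 + Q2) ** B = A ** Q1 ** B + A ** Q2 ** B"
      by (simp add: matrix_add_ldistrib)
  qed (simp add: matrix_scalar_ac scalar_matrix_assoc)
  thus ?thesis by (simp add: linear_conv_bounded_linear)
qed

lemma has_vector_derivative_at_0_of_difference_quotient: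
  fixes G :: "real \<Rightarrow> 'a::real_normed_vector"
  assumes "((\<lambda>t. (G t - G 0) /\<^sub>R t) \<longlongrightarrow> D) (at 0)"
  shows "(G has_vector_derivative D) (at 0)"
proof -
  have "((\<lambda>t. norm ((G t - G 0) /\<^sub>R t - D)) \<longlongrightarrow> 0) (at 0)"
    using assms by (intro tendsto_norm_zero LIM_zero)
  moreover have "eventually (\<lambda>t. norm ((G t - G 0) /\<^sub>R t - D)
      = norm (G t - G 0 - (t - 0) *\<^sub>R D) / norm (t - 0)) (at (0::real))"
  proof -
    have "norm ((G t - G 0) /\<^sub>R t - D) = norm (G t - G 0 - (t - 0) *\<^sub>R D) / norm (t - 0)"
      if "t \<noteq> 0" for t
    proof -
      have "G t - G 0 - t *\<^sub>R D = t *\<^sub>R ((G t - G 0) /\<^sub>R t - D)"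
        using that by (simp add: algebra_simps)
      thus ?thesis using that by simp
    qed
    thus ?thesis by (auto simp: eventually_at_filter)
  qed
  ultimately have "((\<lambda>t. norm (G t - G 0 - (t - 0) *\<^sub>R D) / norm (t - 0)) \<longlongrightarrow> 0) (at 0)"
    by (rule Lim_transform_eventually)
  thus ?thesis
    unfolding has_vector_derivative_def has_derivative_iff_norm
    by (auto intro: bounded_linear_scaleR_left)
qed

lemma has_vector_derivative_at_0_of_entry_bounds:
  fixes G :: "real \<Rightarrow> real^'n^'m"
  assumes "\<delta> > 0"
    and bound: "\<And>t i j. t \<noteq> 0 \<Longrightarrow> \<bar>t\<bar> < \<delta> \<Longrightarrow> \<bar>(G t - G 0) $ i $ j / t - D $ i $ j\<bar> \<le> C i j * \<bar>t\<bar>"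
  shows "(G has_vector_derivative D) (at 0)"
proof -
  have "((\<lambda>t. (G t - G 0) /\<^sub>R t) \<longlongrightarrow> D) (at 0)"
  proof (intro vec_tendstoI)
    fix i j
    have "eventually (\<lambda>t. t \<noteq> 0 \<and> \<bar>t\<bar> < \<delta>) (at (0::real))"
      using \<open>\<delta> > 0\<close> by (auto simp: eventually_at dist_real_def intro!: exI[of _ \<delta>])
    then have "eventually (\<lambda>t. norm (((G t - G 0) /\<^sub>R t) $ i $ j - D $ i $ j) \<le> C i j * \<bar>t\<bar>) (at 0)"
    proof eventually_elim
      case (elim t)
      then show ?case using bound[of t i j] by (simp add: divide_inverse mult.commute)
    qed
    moreover have "((\<lambda>t. C i j * \<bar>t\<bar>) \<longlongrightarrow> 0) (at (0::real))"
      using tendsto_mult_left[OF tendsto_rabs[OF tendsto_ident_at], of "C i j" 0] by simp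
    ultimately have "((\<lambda>t. ((G t - G 0) /\<^sub>R t) $ i $ j - D $ i $ j) \<longlongrightarrow> 0) (at 0)"
      by (rule Lim_null_comparison)
    then show "((\<lambda>t. ((G t - G 0) /\<^sub>R t) $ i $ j) \<longlongrightarrow> D $ i $ j) (at 0)"
      by (rule LIM_zero_cancel)
  qed
  then show ?thesis by (rule has_vector_derivative_at_0_of_difference_quotient)
qed

lemma spectral_fun_difference_quotient_entry:
  fixes U V X :: "real^'n^'n"
  assumes U: "orthogonal_matrix U" and V: "orthogonal_matrix V"
    and eq: "orth_diag U l + t *\<^sub>R X = orth_diag V \<mu>" and t: "t \<noteq> 0"
    and df: "\<And>x. x > 0 \<Longrightarrow> (f has_real_derivative f' x) (at x)"
    and df': "\<And>x. x > 0 \<Longrightarrow> (f' has_real_derivative f'' x) (at x)"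
    and a: "a > 0" and K: "\<And>x. a \<le> x \<Longrightarrow> x \<le> b \<Longrightarrow> \<bar>f'' x\<bar> \<le> K" and K0: "K \<ge> 0"
    and l: "\<And>k. a \<le> l k \<and> l k \<le> b" and \<mu>: "\<And>k. a \<le> \<mu> k \<and> \<mu> k \<le> b"
  shows "\<bar>column i U \<bullet> ((orth_diag V (\<lambda>k. f (\<mu> k)) - orth_diag U (\<lambda>k. f (l k))) *v column j U) / t
          - divdiff f f' (l i) (l j) * (column i U \<bullet> (X *v column j U))\<bar>
       \<le> real CARD('n) * K * norm (X *v column i U) * norm (X *v column j U) * \<bar>t\<bar>"
proof -
  let ?u = "\<lambda>i. column i U"
  define H where "H = orth_diag V (\<lambda>k. divdiff (divdiff f f' (l j)) (\<lambda>_. 0) (l i) (\<mu> k))"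
  have "orth_diag V \<mu> - orth_diag U l = t *\<^sub>R X" by (simp flip: eq)
  then have "column i U \<bullet> ((orth_diag V (\<lambda>k. f (\<mu> k)) - orth_diag U (\<lambda>k. f (l k))) *v column j U)
      = divdiff f f' (l i) (l j) * (?u i \<bullet> ((t *\<^sub>R X) *v ?u j))
        + (H *v ((t *\<^sub>R X) *v ?u i)) \<bullet> ((t *\<^sub>R X) *v ?u j)"
    using orth_diag_fun_second_order[OF U V, where \<mu> = \<mu> and l = l and f = f and f' = f'] by (simp add: H_def)
  also have "\<dots> = t * (divdiff f f' (l i) (l j) * (?u i \<bullet> (X *v ?u j)))
        + t * (t * ((H *v (X *v ?u i)) \<bullet> (X *v ?u j)))"
    by (simp add: scaleR_matrix_vector_assoc[symmetric] matrix_vector_mult_scaleR)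
  finally have "column i U \<bullet> ((orth_diag V (\<lambda>k. f (\<mu> k)) - orth_diag U (\<lambda>k. f (l k))) *v column j U) / t
      - divdiff f f' (l i) (l j) * (?u i \<bullet> (X *v ?u j)) = t * ((H *v (X *v ?u i)) \<bullet> (X *v ?u j))"
    using t by (simp add: field_simps)
  moreover have "\<bar>(H *v (X *v ?u i)) \<bullet> (X *v ?u j)\<bar> \<le> real CARD('n) * K * norm (X *v ?u i) * norm (X *v ?u j)"
    unfolding H_def
    by (rule orth_diag_inner_bound[OF V], rule divdiff2_bound[OF df df' a K K0]) (use l \<mu> in auto)
  ultimately show ?thesis by (simp add: abs_mult mult_left_mono mult.commute)
qed

lemma has_vector_derivative_spectral_fun:
  fixes F :: "real^'n^'n \<Rightarrow> real^'n^'n" and U X :: "real^'n^'n"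
  assumes F: "\<And>V \<mu>. orthogonal_matrix V \<Longrightarrow> F (orth_diag V \<mu>) = orth_diag V (\<lambda>k. f (\<mu> k))"
    and df: "\<And>x. x > 0 \<Longrightarrow> (f has_real_derivative f' x) (at x)"
    and df': "\<And>x. x > 0 \<Longrightarrow> (f' has_real_derivative f'' x) (at x)"
    and cont: "continuous_on {0<..} f''"
    and U: "orthogonal_matrix U" and l: "\<And>i. l i > 0" and X: "transpose X = X"
  shows "((\<lambda>t. F (orth_diag U l + t *\<^sub>R X)) has_vector_derivative
           U ** (\<chi> i j. divdiff f f' (l i) (l j) * (column i U \<bullet> (X *v column j U))) ** transpose U) (at 0)"
proof -
  define M where "M = (\<chi> i j. divdiff f f' (l i) (l j) * (column i U \<bullet> (X *v column j U)))"
  define G where "G t = transpose U ** F (orth_diag U l + t *\<^sub>R X) ** U" for t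
  have "transpose (orth_diag U l + t *\<^sub>R X) = orth_diag U l + t *\<^sub>R X" for t
    using X by (simp add: transpose_add transpose_scalar)
  then obtain V \<mu> where V: "\<And>t. orthogonal_matrix (V t)"
    and eq: "\<And>t. orth_diag U l + t *\<^sub>R X = orth_diag (V t) (\<mu> t)"
    by (rule symmetric_matrix_family_diagonalization[where A = "\<lambda>t. orth_diag U l + t *\<^sub>R X"]) blast
  obtain a \<delta> b where a: "a > 0" and \<delta>: "\<delta> > 0" and l_ab: "\<And>k. a \<le> l k \<and> l k \<le> b"
    and \<mu>_ab: "\<And>t k. \<bar>t\<bar> \<le> \<delta> \<Longrightarrow> a \<le> \<mu> t k \<and> \<mu> t k \<le> b"
    by (rule eigenvalues_of_perturbation_bounded[OF U l V eq]) blast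
  have "compact (f'' ` {a..b})"
    by (rule compact_continuous_image[OF continuous_on_subset[OF cont]]) (use a in auto)
  then obtain K where "\<forall>y \<in> f'' ` {a..b}. \<bar>y\<bar> \<le> K"
    using compact_imp_bounded bounded_real by blast
  then have K: "\<And>x. a \<le> x \<Longrightarrow> x \<le> b \<Longrightarrow> \<bar>f'' x\<bar> \<le> K" by auto
  have K0: "K \<ge> 0" using K l_ab by (meson abs_ge_zero order_trans)
  have "(G has_vector_derivative M) (at 0)"
  proof (rule has_vector_derivative_at_0_of_entry_bounds[OF \<delta>])
    fix t :: real and i j assume t: "t \<noteq> 0" "\<bar>t\<bar> < \<delta>"
    have "(G t - G 0) $ i $ j
        = column i U \<bullet> ((orth_diag (V t) (\<lambda>k. f (\<mu> t k)) - orth_diag U (\<lambda>k. f (l k))) *v column j U)"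
      by (simp add: G_def matrix_mult_diff_conj orthogonal_conj_entry eq F[OF V] F[OF U])
    moreover have "a \<le> \<mu> t k \<and> \<mu> t k \<le> b" for k using \<mu>_ab t by simp
    ultimately show "\<bar>(G t - G 0) $ i $ j / t - M $ i $ j\<bar>
        \<le> real CARD('n) * K * norm (X *v column i U) * norm (X *v column j U) * \<bar>t\<bar>"
      using spectral_fun_difference_quotient_entry[OF U V eq t(1) df df' a K K0 l_ab]
      by (simp add: M_def)
  qed
  then have "((\<lambda>t. U ** G t ** transpose U) has_vector_derivative U ** M ** transpose U) (at 0)"
    by (rule bounded_linear.has_vector_derivative[OF bounded_linear_matrix_conj])
  moreover have "U ** G t ** transpose U = F (orth_diag U l + t *\<^sub>R X)" for t
    using U by (simp add: G_def matrix_mul_assoc orthogonal_matrix_cancel(4) orthogonal_matrix_def)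
  ultimately show ?thesis by (simp add: M_def)
qed

section \<open>The mixed power-Euclidean form\<close>

definition phi_fun :: "real \<Rightarrow> real \<Rightarrow> real" where
  "phi_fun \<theta> x = (if \<theta> = 0 then ln x else exp (\<theta> * ln x) / \<theta>)"

definition phi_fun' :: "real \<Rightarrow> real \<Rightarrow> real" where
  "phi_fun' \<theta> x = exp ((\<theta> - 1) * ln x)"

definition phi_fun'' :: "real \<Rightarrow> real \<Rightarrow> real" where
  "phi_fun'' \<theta> x = (\<theta> - 1) * exp ((\<theta> - 2) * ln x)"

lemma exp_mult_ln_pred:
  fixes x :: real
  assumes "x > 0"
  shows "exp ((a - 1) * ln x) = exp (a * ln x) / x"
proof -
  have "exp ((a - 1) * ln x) = exp (a * ln x) / exp (ln x)"
    by (simp add: left_diff_distrib exp_diff[symmetric])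
  thus ?thesis using assms by simp
qed

lemma phi_fun_has_derivative: "x > 0 \<Longrightarrow> (phi_fun \<theta> has_real_derivative phi_fun' \<theta> x) (at x)"
proof (cases "\<theta> = 0")
  case True
  moreover assume "x > 0"
  moreover have "phi_fun \<theta> = ln" using True by (simp add: fun_eq_iff phi_fun_def)
  ultimately show ?thesis by (simp add: phi_fun'_def exp_minus DERIV_ln)
next
  case False
  assume x: "x > 0"
  have "phi_fun \<theta> = (\<lambda>x. exp (\<theta> * ln x) / \<theta>)"
    using False by (simp add: fun_eq_iff phi_fun_def)
  moreover have "((\<lambda>x. exp (\<theta> * ln x) / \<theta>) has_real_derivative exp (\<theta> * ln x) * (\<theta> * inverse x) / \<theta>) (at x)"
    using x by (auto intro!: derivative_eq_intros simp: field_simps)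
  moreover have "exp (\<theta> * ln x) * (\<theta> * inverse x) / \<theta> = phi_fun' \<theta> x"
    unfolding phi_fun'_def exp_mult_ln_pred[OF x] using False x by (simp add: field_simps)
  ultimately show ?thesis by simp
qed

lemma phi_fun'_has_derivative: "x > 0 \<Longrightarrow> (phi_fun' \<theta> has_real_derivative phi_fun'' \<theta> x) (at x)"
proof -
  assume x: "x > 0"
  have "(phi_fun' \<theta> has_real_derivative exp ((\<theta> - 1) * ln x) * ((\<theta> - 1) * inverse x)) (at x)"
    unfolding phi_fun'_def[abs_def] using x by (auto intro!: derivative_eq_intros simp: field_simps)
  moreover have "exp ((\<theta> - 1) * ln x) * ((\<theta> - 1) * inverse x) = phi_fun'' \<theta> x"
    using x exp_mult_ln_pred[OF x, of "\<theta> - 1"] by (simp add: phi_fun''_def field_simps)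
  ultimately show ?thesis by simp
qed

lemma phi_fun'_pos: "phi_fun' \<theta> x > 0"
  by (simp add: phi_fun'_def)

lemma continuous_on_phi_fun'': "continuous_on {0<..} (phi_fun'' \<theta>)"
  unfolding phi_fun''_def by (intro continuous_intros) auto

lemma phi_orth_diag:
  assumes "orthogonal_matrix V"
  shows "phi \<theta> (orth_diag V \<mu>) = orth_diag V (\<lambda>k. phi_fun \<theta> (\<mu> k))"
  using assms
  by (cases "\<theta> = 0")
    (simp_all add: phi_def mat_log_def mat_pow_def matfun_orth_diag scaleR_orth_diag phi_fun_def)

lemma dphi_orth_diag:
  fixes U X :: "real^'n^'n"
  assumes U: "orthogonal_matrix U" and l: "\<forall>i. l i > 0" and X: "X \<in> Sym"
  shows "dphi \<theta> (orth_diag U l) X = U ** (\<chi> i j. divdiff (phi_fun \<theta>) (phi_fun' \<theta>) (l i) (l j)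
            * (column i U \<bullet> (X *v column j U))) ** transpose U"
proof -
  have "transpose X = X" using X by (simp add: Sym_def)
  then show ?thesis
    unfolding dphi_def
    by (intro vector_derivative_at has_vector_derivative_spectral_fun[OF phi_orth_diag
          phi_fun_has_derivative phi_fun'_has_derivative continuous_on_phi_fun'' U]) (use l in auto)
qed

lemma trace_orth_conj_mult:
  fixes U A B :: "real^'n^'n"
  assumes "orthogonal_matrix U"
  shows "trace (U ** A ** transpose U ** (U ** B ** transpose U)) = (\<Sum>i\<in>UNIV. \<Sum>j\<in>UNIV. A $ i $ j * B $ j $ i)"
proof -
  have "U ** A ** transpose U ** (U ** B ** transpose U) = U ** (A ** B) ** transpose U"
    using assms by (simp add: matrix_mul_assoc orthogonal_matrix_cancel(3))
  also have "trace \<dots> = trace (transpose U ** U ** (A ** B))"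
    by (metis matrix_mul_assoc trace_mul_sym)
  also have "\<dots> = trace (A ** B)"
    using assms by (simp add: orthogonal_matrix_def)
  also have "\<dots> = (\<Sum>i\<in>UNIV. \<Sum>j\<in>UNIV. A $ i $ j * B $ j $ i)"
    by (simp add: trace_def matrix_matrix_mult_def)
  finally show ?thesis .
qed

lemma gE_orth_diag:
  fixes U X Y :: "real^'n^'n"
  assumes U: "orthogonal_matrix U" and l: "\<forall>i. l i > 0" and X: "X \<in> Sym" and Y: "Y \<in> Sym"
  shows "gE \<theta>1 \<theta>2 (orth_diag U l) X Y = (\<Sum>i\<in>UNIV. \<Sum>j\<in>UNIV.
           divdiff (phi_fun \<theta>1) (phi_fun' \<theta>1) (l i) (l j) * divdiff (phi_fun \<theta>2) (phi_fun' \<theta>2) (l i) (l j)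
           * (column i U \<bullet> (X *v column j U)) * (column i U \<bullet> (Y *v column j U)))"
proof -
  have "column j U \<bullet> (Y *v column i U) = column i U \<bullet> (Y *v column j U)" for i j
    using Y symmetric_matrix_inner[of Y "column j U" "column i U"]
    by (simp add: Sym_def inner_commute)
  then show ?thesis
    unfolding gE_def dphi_orth_diag[OF U l X] dphi_orth_diag[OF U l Y] trace_orth_conj_mult[OF U]
    by (simp add: divdiff_commute[of _ _ "l i" "l j" for i j] mult_ac)
qed

lemma gE_orth_diag_pos:
  fixes U X :: "real^'n^'n"
  assumes U: "orthogonal_matrix U" and l: "\<forall>i. l i > 0" and X: "X \<in> Sym" "X \<noteq> 0"
  shows "gE \<theta>1 \<theta>2 (orth_diag U l) X X > 0"
proof -
  define T where "T i j = divdiff (phi_fun \<theta>1) (phi_fun' \<theta>1) (l i) (l j)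
      * divdiff (phi_fun \<theta>2) (phi_fun' \<theta>2) (l i) (l j) * (column i U \<bullet> (X *v column j U))\<^sup>2" for i j
  have c: "divdiff (phi_fun \<theta>) (phi_fun' \<theta>) (l i) (l j) > 0" for \<theta> i j
    using l by (intro divdiff_pos[OF phi_fun_has_derivative phi_fun'_pos]) auto
  then have T0: "T i j \<ge> 0" for i j
    unfolding T_def by (intro mult_nonneg_nonneg zero_le_power2 less_imp_le)
  obtain i j where "column i U \<bullet> (X *v column j U) \<noteq> 0"
  proof (rule ccontr)
    assume "\<not> thesis"
    with that have "column i U \<bullet> (X *v column j U) = 0" for i j by blast
    then have "transpose U ** X ** U = 0" by (simp add: vec_eq_iff orthogonal_conj_entry)
    then have "U ** (transpose U ** X ** U) ** transpose U = 0" by simp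
    then show False
      using U X(2) by (simp add: matrix_mul_assoc orthogonal_matrix_cancel(4) orthogonal_matrix_def)
  qed
  then have "T i j > 0" using c by (simp add: T_def)
  then have "(\<Sum>j\<in>UNIV. T i j) > 0"
    using sum_pos2[where f = "T i", of UNIV j] T0 by simp
  then have "(\<Sum>i\<in>UNIV. \<Sum>j\<in>UNIV. T i j) > 0"
    using sum_pos2[where f = "\<lambda>i. \<Sum>j\<in>UNIV. T i j", of UNIV i] T0 by (simp add: sum_nonneg)
  then show ?thesis by (simp add: gE_orth_diag[OF U l X(1) X(1)] T_def power2_eq_square mult.assoc)
qed

lemma SPD_orth_diag:
  assumes "\<Sigma> \<in> SPD"
  obtains U l where "orthogonal_matrix U" "\<Sigma> = orth_diag U l" "\<forall>i. l i > 0"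
proof -
  have sym: "transpose \<Sigma> = \<Sigma>" and pos: "\<And>x. x \<noteq> 0 \<Longrightarrow> x \<bullet> (\<Sigma> *v x) > 0"
    using assms by (auto simp: SPD_def)
  obtain U l where U: "orthogonal_matrix U" and S: "\<Sigma> = orth_diag U l"
    using symmetric_matrix_orthogonal_diagonalization[OF sym] .
  have "l i > 0" for i
  proof -
    have "norm (column i U) = 1" using U by (simp add: orthogonal_matrix_orthonormal_columns)
    moreover from this have "column i U \<bullet> (\<Sigma> *v column i U) > 0" by (intro pos) auto
    ultimately show ?thesis
      by (simp add: S orth_diag_column[OF U] norm_eq_1)
  qed
  with U S that show ?thesis by blast
qed

theorem theorem4:
  fixes \<theta>1 \<theta>2 :: real and \<Sigma> :: "real^'n^'n"
  assumes "\<Sigma> \<in> SPD"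
  shows "(\<forall>X\<in>Sym. \<forall>Y\<in>Sym. gE \<theta>1 \<theta>2 \<Sigma> X Y = gE \<theta>1 \<theta>2 \<Sigma> Y X)
       \<and> (\<forall>X\<in>Sym. X \<noteq> 0 \<longrightarrow> gE \<theta>1 \<theta>2 \<Sigma> X X > 0)
       \<and> (\<forall>X\<in>Sym. \<forall>Y\<in>Sym. gE \<theta>1 \<theta>2 \<Sigma> X Y = gE \<theta>2 \<theta>1 \<Sigma> X Y)"
proof -
  obtain U l where U: "orthogonal_matrix U" and S: "\<Sigma> = orth_diag U l" and l: "\<forall>i. l i > 0"
    using SPD_orth_diag[OF assms] .
  show ?thesis
    unfolding S using gE_orth_diag[OF U l] gE_orth_diag_pos[OF U l]
    by (simp add: mult_ac)
qed

end
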